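(* For all $n\geq 1$, the spectral radius of $A_n$ is $2(1+\kappa_n)$, and hence the spectral radius of $M_n=(2(1+\kappa_n))^{-1}A_n$ is $1$.
   Context: For $\kappa\in(0,1/2)$, the paired tent map $T_\kappa:[-1,1]\to[-1,1]$ is $T_\kappa(x)=2(1+\kappa)(x+1)-1$ for $x\in[-1,-1/2]$, $T_\kappa(x)=-2(1+\kappa)x-1$ for $x\in[-1/2,0)$, $T_\kappa(0)=0$, $T_\kappa(x)=-2(1+\kappa)x+1$ for $x\in(0,1/2]$, $T_\kappa(x)=2(1+\kappa)(x-1)+1$ for $x\in[1/2,1]$. For $n\geq1$, $\kappa_n$ is the unique solution in $(0,1/2)$ of $(2+2\kappa)^n\kappa=1$, and $T_n=T_{\kappa_n}$. Let $r_0<\dots<r_{2n+4}$ enumerate increasingly the $2n+5$ distinct points of $\{-1,-1/2,0,1/2,1\}\cup\{T_n^i(\pm\kappa_n):0\le i\le n-1\}$ and $R_i=(r_{i-1},r_i)$. $A_n$ is the $(2n+4)\times(2n+4)$ matrix with $a_{ij}=1$ if $R_i\subset T_n(R_j)$ and $0$ otherwise. *)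

theory Defs
  imports Complex_Main "Jordan_Normal_Form.Spectral_Radius"
begin

text \<open>Paired tent map T_kappa on [-1,1] (values outside [-1,1] are irrelevant).\<close>
definition paired_tent :: "real \<Rightarrow> real \<Rightarrow> real" where
  "paired_tent k x =
     (if x \<le> -1/2 then 2*(1+k)*(x+1) - 1
      else if x < 0 then -2*(1+k)*x - 1
      else if x = 0 then 0
      else if x \<le> 1/2 then -2*(1+k)*x + 1
      else 2*(1+k)*(x-1) + 1)"

definition kappa :: "nat \<Rightarrow> real" where
  "kappa n = (THE k. 0 < k \<and> k < 1/2 \<and> (2 + 2*k)^n * k = 1)"

definition Tn :: "nat \<Rightarrow> real \<Rightarrow> real" where
  "Tn n = paired_tent (kappa n)"

definition part_points :: "nat \<Rightarrow> real set" where
  "part_points n = {-1, -1/2, 0, 1/2, 1}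
     \<union> {(Tn n ^^ i) (kappa n) | i. i \<le> n - 1}
     \<union> {(Tn n ^^ i) (- kappa n) | i. i \<le> n - 1}"

text \<open>r n i: the i-th partition point in increasing order (i = 0, ..., 2n+4).\<close>
definition r :: "nat \<Rightarrow> nat \<Rightarrow> real" where
  "r n i = sorted_list_of_set (part_points n) ! i"

definition R :: "nat \<Rightarrow> nat \<Rightarrow> real set" where
  "R n i = {r n (i - 1) <..< r n i}"

text \<open>The (2n+4)x(2n+4) transition matrix A_n; the JNF matrix index (i,j) (0-based)
  corresponds to the paper's a_{(i+1)(j+1)}.\<close>
definition A :: "nat \<Rightarrow> complex mat" where
  "A n = mat (2*n+4) (2*n+4)
     (\<lambda>(i,j). if R n (i+1) \<subseteq> Tn n ` R n (j+1) then 1 else 0)"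

definition M :: "nat \<Rightarrow> complex mat" where
  "M n = complex_of_real (inverse (2*(1 + kappa n))) \<cdot>\<^sub>m A n"

end

theory Submission
  imports Defs
begin

text \<open>Put \<lambda> = 2(1 + \<kappa>). Each branch of T = T_n is affine with slope \<plusminus>\<lambda>,
  and the orbit of \<kappa> is T^i(\<kappa>) = 1 - \<lambda>^(i-n) for 1 \<le> i \<le> n, ending at T^n(\<kappa>) = 0.
  Consequently the branch of T over R_j maps both end points of R_j to partition points, so
  T maps R_j affinely onto a union of consecutive intervals R_i. Comparing lengths gives
  \<Sum>_i |R_i| a_ij = \<lambda> |R_j|: the interval lengths form a positive left eigenvector of A_n
  for \<lambda>. For a nonnegative matrix the eigenvalue of a positive left eigenvector is the
  spectral radius: it is an eigenvalue, and pairing an eigenvector w for any eigenvalue \<mu>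
  with the lengths gives |\<mu>| \<le> \<lambda>.\<close>

lemma eigenvalue_if_left_eigenvector:
  fixes B :: "'a :: field mat"
  assumes B: "B \<in> carrier_mat N N"
    and v: "v \<in> carrier_vec N" "v \<noteq> 0\<^sub>v N" "transpose_mat B *\<^sub>v v = \<mu> \<cdot>\<^sub>v v"
  shows "eigenvalue B \<mu>"
proof -
  have "eigenvalue (transpose_mat B) \<mu>"
    using B v unfolding eigenvalue_def eigenvector_def by auto
  then show ?thesis
    using eigenvalue_root_char_poly[of "transpose_mat B" N] eigenvalue_root_char_poly[OF B] B
    by simp
qed

lemma eigenvalue_norm_le_if_positive_left_eigenvector:
  fixes B :: "complex mat" and b :: "nat \<Rightarrow> nat \<Rightarrow> real" and l :: "nat \<Rightarrow> real"
  assumes B: "B \<in> carrier_mat N N"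
    and Bb: "\<And>i j. i < N \<Longrightarrow> j < N \<Longrightarrow> B $$ (i,j) = complex_of_real (b i j)"
    and b_nonneg: "\<And>i j. i < N \<Longrightarrow> j < N \<Longrightarrow> b i j \<ge> 0"
    and l_pos: "\<And>i. i < N \<Longrightarrow> l i > 0"
    and left_eig: "\<And>j. j < N \<Longrightarrow> (\<Sum>i<N. l i * b i j) = \<rho> * l j"
    and "eigenvalue B \<mu>"
  shows "norm \<mu> \<le> \<rho>"
proof -
  obtain w where w: "w \<in> carrier_vec N" "w \<noteq> 0\<^sub>v N" "B *\<^sub>v w = \<mu> \<cdot>\<^sub>v w"
    using \<open>eigenvalue B \<mu>\<close> B unfolding eigenvalue_def eigenvector_def by auto
  have row_bound: "norm \<mu> * norm (w $ i) \<le> (\<Sum>j<N. b i j * norm (w $ j))" if i: "i < N" for i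
  proof -
    have "\<mu> * w $ i = (\<Sum>j<N. complex_of_real (b i j) * w $ j)"
      using arg_cong[OF w(3), of "\<lambda>u. u $ i"] B i w(1) Bb
      by (auto simp: scalar_prod_def atLeast0LessThan intro!: sum.cong)
    then have "norm \<mu> * norm (w $ i) \<le> (\<Sum>j<N. norm (complex_of_real (b i j) * w $ j))"
      by (metis norm_mult norm_sum)
    also have "\<dots> = (\<Sum>j<N. b i j * norm (w $ j))"
      using b_nonneg i by (intro sum.cong) (auto simp: norm_mult)
    finally show ?thesis .
  qed
  define S where "S = (\<Sum>j<N. l j * norm (w $ j))"
  have "S > 0"
  proof -
    obtain j where j: "j < N" "w $ j \<noteq> 0"
      using w(1,2) by (metis eq_vecI index_zero_vec carrier_vecD)
    then have "0 < l j * norm (w $ j)" using l_pos by simp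
    also have "\<dots> \<le> S" unfolding S_def
      using j l_pos by (intro member_le_sum) (auto simp: less_imp_le)
    finally show ?thesis .
  qed
  have "norm \<mu> * S = (\<Sum>i<N. l i * (norm \<mu> * norm (w $ i)))"
    unfolding S_def by (simp add: sum_distrib_left algebra_simps)
  also have "\<dots> \<le> (\<Sum>i<N. l i * (\<Sum>j<N. b i j * norm (w $ j)))"
    using l_pos row_bound by (intro sum_mono mult_left_mono) (auto simp: less_imp_le)
  also have "\<dots> = (\<Sum>j<N. (\<Sum>i<N. l i * b i j) * norm (w $ j))"
    unfolding sum_distrib_left sum_distrib_right mult.assoc by (rule sum.swap)
  also have "\<dots> = \<rho> * S"
    unfolding S_def sum_distrib_left using left_eig by (intro sum.cong) auto
  finally show ?thesis using \<open>S > 0\<close> by simp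
qed

lemma spectral_radius_eq_if_positive_left_eigenvector:
  fixes B :: "complex mat" and b :: "nat \<Rightarrow> nat \<Rightarrow> real" and l :: "nat \<Rightarrow> real"
  assumes B: "B \<in> carrier_mat N N" and N: "N > 0"
    and Bb: "\<And>i j. i < N \<Longrightarrow> j < N \<Longrightarrow> B $$ (i,j) = complex_of_real (b i j)"
    and b_nonneg: "\<And>i j. i < N \<Longrightarrow> j < N \<Longrightarrow> b i j \<ge> 0"
    and l_pos: "\<And>i. i < N \<Longrightarrow> l i > 0"
    and left_eig: "\<And>j. j < N \<Longrightarrow> (\<Sum>i<N. l i * b i j) = \<rho> * l j"
  shows "spectral_radius B = \<rho>"
proof -
  have "0 \<le> (\<Sum>i<N. l i * b i 0)"
    using N l_pos b_nonneg by (intro sum_nonneg) (simp add: less_imp_le)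
  then have "\<rho> \<ge> 0"
    using left_eig[OF N] l_pos[OF N] by (simp add: zero_le_mult_iff)
  define v where "v = vec N (\<lambda>i. complex_of_real (l i))"
  have "v \<noteq> 0\<^sub>v N"
  proof
    assume "v = 0\<^sub>v N"
    then have "v $ 0 = 0" using N by simp
    then show False using l_pos[OF N] N by (simp add: v_def)
  qed
  moreover have "transpose_mat B *\<^sub>v v = complex_of_real \<rho> \<cdot>\<^sub>v v"
  proof (rule eq_vecI)
    fix j assume "j < dim_vec (complex_of_real \<rho> \<cdot>\<^sub>v v)"
    then have j: "j < N" by (simp add: v_def)
    have "(transpose_mat B *\<^sub>v v) $ j = (\<Sum>i<N. complex_of_real (l i * b i j))"
      using B j Bb by (auto simp: scalar_prod_def v_def atLeast0LessThan mult.commute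
          intro!: sum.cong)
    also have "\<dots> = complex_of_real (\<rho> * l j)"
      by (simp only: of_real_sum[symmetric] left_eig[OF j])
    finally show "(transpose_mat B *\<^sub>v v) $ j = (complex_of_real \<rho> \<cdot>\<^sub>v v) $ j"
      using j by (simp add: v_def)
  qed (use B in \<open>simp add: v_def\<close>)
  ultimately have "eigenvalue B (complex_of_real \<rho>)"
    using B by (intro eigenvalue_if_left_eigenvector[OF B, of v]) (auto simp: v_def)
  then have "norm (complex_of_real \<rho>) \<le> spectral_radius B"
    by (intro spectral_radius_mem_max(2)[OF B N] imageI) (simp add: spectrum_def)
  then have "\<rho> \<le> spectral_radius B" using \<open>\<rho> \<ge> 0\<close> by simp
  moreover obtain \<mu> where "eigenvalue B \<mu>" "spectral_radius B = norm \<mu>"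
    using spectral_radius_mem_max(1)[OF B N] by (auto simp: spectrum_def)
  moreover have "norm \<mu> \<le> \<rho>"
    by (rule eigenvalue_norm_le_if_positive_left_eigenvector[OF B Bb b_nonneg l_pos left_eig])
      (use \<open>eigenvalue B \<mu>\<close> in auto)
  ultimately show ?thesis by simp
qed

lemma kappa_spec:
  assumes "n \<ge> 1"
  shows "0 < kappa n" "kappa n < 1/2" "(2 + 2 * kappa n) ^ n * kappa n = 1"
proof -
  define f where "f x = (2 + 2 * x) ^ n * x" for x :: real
  have f_less: "f a < f b" if "0 < a" "a < b" for a b
    unfolding f_def using that assms by (intro mult_strict_mono power_strict_mono) auto
  have "(3::real) ^ 1 \<le> 3 ^ n" using assms by (intro power_increasing) auto
  then have "f 0 < 1" "1 < f (1/2)" by (simp_all add: f_def)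
  moreover have "continuous_on {0..1/2} f" unfolding f_def by (intro continuous_intros)
  ultimately obtain x where x: "0 \<le> x" "x \<le> 1/2" "f x = 1"
    using IVT'[of f 0 1 "1/2"] by auto
  with \<open>f 0 < 1\<close> \<open>1 < f (1/2)\<close> have x_spec: "0 < x \<and> x < 1/2 \<and> f x = 1"
    by (metis less_eq_real_def less_irrefl)
  have "kappa n = x"
    unfolding kappa_def
  proof (rule the_equality)
    show "0 < x \<and> x < 1/2 \<and> (2 + 2 * x) ^ n * x = 1" using x_spec by (simp add: f_def)
  next
    fix z :: real assume "0 < z \<and> z < 1/2 \<and> (2 + 2 * z) ^ n * z = 1"
    then show "z = x"
      using f_less[of z x] f_less[of x z] x_spec by (cases z x rule: linorder_cases) (auto simp: f_def)
  qed
  with x_spec show "0 < kappa n" "kappa n < 1/2" "(2 + 2 * kappa n) ^ n * kappa n = 1"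
    by (simp_all add: f_def)
qed

lemma paired_tent_minus: "paired_tent c (- x) = - paired_tent c x"
  by (cases "x = 1/2 \<or> x = -1/2") (auto simp: paired_tent_def algebra_simps)

lemma funpow_paired_tent_minus: "(paired_tent c ^^ i) (- x) = - (paired_tent c ^^ i) x"
  by (induction i) (auto simp: paired_tent_minus)

lemma image_affine_greaterThanLessThan_pos:
  fixes c d a b :: real
  assumes "c > 0"
  shows "(\<lambda>x. c * x + d) ` {a<..<b} = {c * a + d<..<c * b + d}"
proof
  show "(\<lambda>x. c * x + d) ` {a<..<b} \<subseteq> {c * a + d<..<c * b + d}" using assms by auto
  show "{c * a + d<..<c * b + d} \<subseteq> (\<lambda>x. c * x + d) ` {a<..<b}"
  proof
    fix z assume "z \<in> {c * a + d<..<c * b + d}"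
    then have "(z - d) / c \<in> {a<..<b}" and "z = c * ((z - d) / c) + d"
      using assms by (auto simp: field_simps)
    then show "z \<in> (\<lambda>x. c * x + d) ` {a<..<b}" by blast
  qed
qed

lemma image_affine_greaterThanLessThan_neg:
  fixes c d a b :: real
  assumes "c < 0"
  shows "(\<lambda>x. c * x + d) ` {a<..<b} = {c * b + d<..<c * a + d}"
proof -
  have "(\<lambda>x. c * x + d) ` {a<..<b} = (\<lambda>x. (- c) * x + d) ` (uminus ` {a<..<b})"
    unfolding image_image by simp
  also have "uminus ` {a<..<b} = {- b<..<- a}"
    by simp
  also have "(\<lambda>x. (- c) * x + d) ` {- b<..<- a} = {(- c) * (- b) + d<..<(- c) * (- a) + d}"
    using assms by (intro image_affine_greaterThanLessThan_pos) simp
  finally show ?thesis by simp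
qed

locale paired_tent_n =
  fixes n :: nat
  assumes n_ge_1: "n \<ge> 1"
begin

definition "k = kappa n"
definition "lam = 2 + 2 * k"
definition "T = Tn n"
definition "y t = 1 - 1 / lam ^ t"

lemma k_pos: "0 < k" and k_less_half: "k < 1/2" and lam_pow_mult_k: "lam ^ n * k = 1"
  using kappa_spec[OF n_ge_1] unfolding k_def lam_def by auto

lemma lam_gt_2: "lam > 2"
  using k_pos unfolding lam_def by simp

lemma lam_half_minus_1: "lam / 2 - 1 = k"
  by (simp add: lam_def field_simps)

lemma y_0: "y 0 = 0"
  by (simp add: y_def)

lemma y_less_1: "y t < 1"
  using lam_gt_2 by (simp add: y_def)

lemma strict_mono_y: "strict_mono y"
proof (rule strict_monoI)
  fix s t :: nat assume "s < t"
  then have "lam ^ s < lam ^ t" using lam_gt_2 by (intro power_strict_increasing) auto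
  then have "1 / lam ^ t < 1 / lam ^ s" using lam_gt_2 by (intro divide_strict_left_mono) auto
  then show "y s < y t" unfolding y_def by simp
qed

lemma y_gt_half: "t \<ge> 1 \<Longrightarrow> y t > 1/2"
proof -
  assume "t \<ge> 1"
  then have "y 1 \<le> y t" using strict_mono_y by (simp add: strict_mono_less_eq)
  moreover have "1 / lam < 1/2" using lam_gt_2 by (simp add: field_simps)
  ultimately show ?thesis by (simp add: y_def)
qed

lemma lam_mult_one_minus_y_Suc: "lam * (1 - y (Suc t)) = 1 - y t"
  using lam_gt_2 by (simp add: y_def)

lemma lam_mult_k: "lam * k = 1 - y (n - 1)"
proof -
  have "lam ^ n = lam * lam ^ (n - 1)" using n_ge_1 by (cases n) auto
  then have "lam * k * lam ^ (n - 1) = 1" using lam_pow_mult_k by (simp add: algebra_simps)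
  then show ?thesis using lam_gt_2 by (simp add: y_def field_simps)
qed

lemma T_eq: "T x =
   (if x \<le> -1/2 then lam * x + (lam - 1) else if x < 0 then - lam * x - 1
    else if x = 0 then 0 else if x \<le> 1/2 then - lam * x + 1 else lam * x + (1 - lam))"
  unfolding T_def Tn_def paired_tent_def k_def[symmetric] lam_def by (simp add: algebra_simps)

lemma funpow_T_k: "1 \<le> i \<Longrightarrow> i \<le> n \<Longrightarrow> (T ^^ i) k = y (n - i)"
proof (induction i)
  case 0
  then show ?case by simp
next
  case (Suc i)
  show ?case
  proof (cases "i = 0")
    case True
    have "T k = 1 - lam * k" using k_pos k_less_half by (simp add: T_eq)
    then show ?thesis using True lam_mult_k by simp
  next
    case False
    then have "(T ^^ i) k = y (n - i)" and n_i: "n - i = Suc (n - Suc i)" using Suc by auto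
    moreover have "T (y (n - i)) = 1 - lam * (1 - y (n - i))"
      using y_gt_half[of "n - i"] y_less_1[of "n - i"] n_i by (simp add: T_eq algebra_simps)
    ultimately show ?thesis by (simp add: lam_mult_one_minus_y_Suc)
  qed
qed

definition "pts = {-1, -1/2, 0, 1/2, 1, k, -k} \<union> y ` {1..n-1} \<union> (\<lambda>t. - y t) ` {1..n-1}"

lemma orbit_k: "{(T ^^ i) k | i. i \<le> n - 1} = insert k (y ` {1..n-1})"
proof (intro equalityI subsetI)
  fix z assume "z \<in> {(T ^^ i) k | i. i \<le> n - 1}"
  then obtain i where i: "i \<le> n - 1" "z = (T ^^ i) k" by auto
  show "z \<in> insert k (y ` {1..n-1})"
  proof (cases "i = 0")
    case False
    then have "z = y (n - i)" and "n - i \<in> {1..n-1}" using i funpow_T_k[of i] n_ge_1 by auto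
    then show ?thesis by blast
  qed (use i in simp)
next
  fix z assume "z \<in> insert k (y ` {1..n-1})"
  then consider "z = k" | t where "t \<in> {1..n-1}" "z = y t" by auto
  then show "z \<in> {(T ^^ i) k | i. i \<le> n - 1}"
  proof cases
    case 1
    then show ?thesis by (intro CollectI exI[of _ 0]) auto
  next
    case (2 t)
    then have "(T ^^ (n - t)) k = z" using funpow_T_k[of "n - t"] by auto
    then show ?thesis using 2 by (intro CollectI exI[of _ "n - t"]) auto
  qed
qed

lemma part_points_eq_pts: "part_points n = pts"
proof -
  have "{(T ^^ i) (- k) | i. i \<le> n - 1} = uminus ` {(T ^^ i) k | i. i \<le> n - 1}"
    unfolding T_def Tn_def by (auto simp: funpow_paired_tent_minus)
  then show ?thesis
    unfolding part_points_def T_def[symmetric] k_def[symmetric] orbit_k pts_def by auto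
qed

lemma y_mem_pts: "t \<le> n - 1 \<Longrightarrow> y t \<in> pts"
  and minus_y_mem_pts: "t \<le> n - 1 \<Longrightarrow> - y t \<in> pts"
  by (cases "t = 0"; auto simp: pts_def y_0)+

text \<open>Values beyond index 2n+4 are junk, chosen to keep pt strictly increasing on all of nat.\<close>
definition "pt i =
   (if i = 0 then -1 else if i < n then - y (n - i) else if i = n then -1/2
    else if i = n + 1 then -k else if i = n + 2 then 0 else if i = n + 3 then k
    else if i = n + 4 then 1/2 else if i < 2 * n + 4 then y (i - n - 4)
    else real (i - (2 * n + 3)))"

lemma pt_0: "i = 0 \<Longrightarrow> pt i = -1"
  and pt_minus_y: "0 < i \<Longrightarrow> i < n \<Longrightarrow> pt i = - y (n - i)"
  and pt_minus_half: "i = n \<Longrightarrow> pt i = -1/2"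
  and pt_minus_k: "i = n + 1 \<Longrightarrow> pt i = -k"
  and pt_zero: "i = n + 2 \<Longrightarrow> pt i = 0"
  and pt_k: "i = n + 3 \<Longrightarrow> pt i = k"
  and pt_half: "i = n + 4 \<Longrightarrow> pt i = 1/2"
  and pt_y: "n + 4 < i \<Longrightarrow> i < 2 * n + 4 \<Longrightarrow> pt i = y (i - n - 4)"
  and pt_beyond: "2 * n + 4 \<le> i \<Longrightarrow> pt i = real (i - (2 * n + 3))"
  using n_ge_1 by (simp_all add: pt_def)

lemma pt_1: "i = 2 * n + 4 \<Longrightarrow> pt i = 1"
  by (simp add: pt_beyond)

lemmas pt_eqs = pt_0 pt_minus_y pt_minus_half pt_minus_k pt_zero pt_k pt_half pt_y pt_1

lemma pt_less_Suc_lower: "i < n + 2 \<Longrightarrow> pt i < pt (Suc i)"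
proof -
  assume "i < n + 2"
  then consider "i = 0" "Suc i = n" | "i = 0" "Suc i < n" | "0 < i" "Suc i < n"
    | "0 < i" "Suc i = n" | "i = n" | "i = n + 1"
    using n_ge_1 by linarith
  then show ?thesis
  proof cases
    case 2
    then show ?thesis using y_less_1[of "n - 1"] by (simp add: pt_eqs)
  next
    case 3
    then show ?thesis using strict_mono_y[THEN strict_monoD, of "n - Suc i" "n - i"]
      by (simp add: pt_eqs)
  next
    case 4
    then have "n - i = 1" by simp
    then show ?thesis using 4 y_gt_half[of 1] by (simp add: pt_eqs)
  qed (use k_pos k_less_half in \<open>simp_all add: pt_eqs\<close>)
qed

lemma pt_less_Suc_upper: "n + 2 \<le> i \<Longrightarrow> pt i < pt (Suc i)"
proof -
  assume "n + 2 \<le> i"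
  then consider "i \<le> n + 3" | "i = n + 4" "Suc i = 2 * n + 4" | "i = n + 4" "Suc i < 2 * n + 4"
    | "n + 5 \<le> i" "Suc i < 2 * n + 4" | "n + 5 \<le> i" "Suc i = 2 * n + 4" | "i \<ge> 2 * n + 4"
    using n_ge_1 by linarith
  then show ?thesis
  proof cases
    case 1
    then show ?thesis using \<open>n + 2 \<le> i\<close> k_pos k_less_half
      by (cases "i = n + 2") (simp_all add: pt_eqs)
  next
    case 3
    then have "Suc i - n - 4 = 1" by simp
    then show ?thesis using 3 y_gt_half[of 1] by (simp add: pt_eqs)
  next
    case 4
    then show ?thesis using strict_mono_y[THEN strict_monoD, of "i - n - 4" "Suc i - n - 4"]
      by (simp add: pt_eqs)
  next
    case 5
    then show ?thesis using y_less_1[of "i - n - 4"] by (simp add: pt_eqs)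
  qed (simp_all add: pt_eqs pt_beyond)
qed

lemma strict_mono_pt: "strict_mono pt"
  using pt_less_Suc_lower pt_less_Suc_upper
  by (simp add: strict_mono_Suc_iff) (metis not_less)

lemma pt_less_iff: "pt i < pt j \<longleftrightarrow> i < j"
  using strict_mono_pt by (simp add: strict_mono_less)

lemma pt_le_iff: "pt i \<le> pt j \<longleftrightarrow> i \<le> j"
  using strict_mono_pt by (simp add: strict_mono_less_eq)

lemma image_pt: "pt ` {0..<2 * n + 5} = pts"
proof (intro equalityI subsetI)
  fix z assume "z \<in> pt ` {0..<2 * n + 5}"
  then obtain i where i: "i < 2 * n + 5" "z = pt i" by auto
  consider "0 < i" "i < n" | "n + 4 < i" "i < 2 * n + 4" | "i = 0 \<or> (n \<le> i \<and> i \<le> n + 4) \<or> i = 2 * n + 4"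
    using i by linarith
  then show "z \<in> pts"
  proof cases
    case 1
    then show ?thesis using i minus_y_mem_pts[of "n - i"] by (simp add: pt_eqs)
  next
    case 2
    then show ?thesis using i y_mem_pts[of "i - n - 4"] by (simp add: pt_eqs)
  next
    case 3
    then consider "i = 0" | "i = n" | "i = n + 1" | "i = n + 2" | "i = n + 3" | "i = n + 4"
      | "i = 2 * n + 4"
      by linarith
    then show ?thesis using i by cases (simp_all add: pts_def pt_eqs)
  qed
next
  have "{-1, -1/2, 0, 1/2, 1, k, -k} = pt ` {0, n, n + 2, n + 4, 2 * n + 4, n + 3, n + 1}"
    by (simp add: pt_eqs)
  also have "\<dots> \<subseteq> pt ` {0..<2 * n + 5}"
    by (intro image_mono) auto
  finally have "{-1, -1/2, 0, 1/2, 1, k, -k} \<subseteq> pt ` {0..<2 * n + 5}" .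
  moreover have "y t = pt (t + n + 4)" "- y t = pt (n - t)" if "t \<in> {1..n-1}" for t
    using that pt_y[of "t + n + 4"] pt_minus_y[of "n - t"] by auto
  then have "y ` {1..n-1} \<subseteq> pt ` {0..<2 * n + 5}" "(\<lambda>t. - y t) ` {1..n-1} \<subseteq> pt ` {0..<2 * n + 5}"
    by force+
  ultimately show "\<And>z. z \<in> pts \<Longrightarrow> z \<in> pt ` {0..<2 * n + 5}"
    unfolding pts_def by blast
qed

lemma r_eq_pt: "i < 2 * n + 5 \<Longrightarrow> r n i = pt i"
proof -
  assume i: "i < 2 * n + 5"
  define L where "L = map pt [0..<2 * n + 5]"
  have "sorted_wrt (<) L"
    unfolding L_def sorted_wrt_map
    by (rule sorted_wrt_mono_rel[OF _ sorted_wrt_upt]) (simp add: pt_less_iff)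
  then have "sorted_list_of_set (set L) = L"
    by (intro sorted_list_of_set.idem_if_sorted_distinct) (auto simp: strict_sorted_iff)
  moreover have "set L = part_points n"
    unfolding L_def set_map set_upt image_pt part_points_eq_pts ..
  moreover have "L ! i = pt i" unfolding L_def using i by (simp del: upt_Suc)
  ultimately show ?thesis unfolding r_def by metis
qed

lemma R_eq: "i < 2 * n + 4 \<Longrightarrow> R n (Suc i) = {pt i<..<pt (Suc i)}"
  unfolding R_def using r_eq_pt[of i] r_eq_pt[of "Suc i"] by simp

lemma T_image_affine_piece:
  assumes "a < b" and T_affine: "\<And>x. a < x \<Longrightarrow> x < b \<Longrightarrow> T x = c * x + d"
    and c: "c = lam \<or> c = - lam" and "c * a + d \<in> pts" "c * b + d \<in> pts"
  shows "\<exists>lo hi. lo < hi \<and> hi < 2 * n + 5 \<and> T ` {a<..<b} = {pt lo<..<pt hi}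
           \<and> pt hi - pt lo = lam * (b - a)"
proof -
  have img: "T ` {a<..<b} = (\<lambda>x. c * x + d) ` {a<..<b}"
    using T_affine by (intro image_cong) auto
  obtain p q where p: "p < 2 * n + 5" "pt p = c * a + d" and q: "q < 2 * n + 5" "pt q = c * b + d"
    using \<open>c * a + d \<in> pts\<close> \<open>c * b + d \<in> pts\<close> unfolding image_pt[symmetric] by auto
  from c show ?thesis
  proof
    assume c: "c = lam"
    then have "pt p < pt q" using p q \<open>a < b\<close> lam_gt_2 by simp
    moreover have "T ` {a<..<b} = {pt p<..<pt q}"
      unfolding img p(2) q(2) using c lam_gt_2 by (intro image_affine_greaterThanLessThan_pos) simp
    moreover have "pt q - pt p = lam * (b - a)" using p q c by (simp add: algebra_simps)
    ultimately show ?thesis using q(1) by (auto simp: pt_less_iff)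
  next
    assume c: "c = - lam"
    then have "pt q < pt p" using p q \<open>a < b\<close> lam_gt_2 by simp
    moreover have "T ` {a<..<b} = {pt q<..<pt p}"
      unfolding img p(2) q(2) using c lam_gt_2 by (intro image_affine_greaterThanLessThan_neg) simp
    moreover have "pt p - pt q = lam * (b - a)" using p q c by (simp add: algebra_simps)
    ultimately show ?thesis using p(1) by (auto simp: pt_less_iff)
  qed
qed

text \<open>The inner branches are evaluated at 0 by their one-sided limits -1 and 1, not by T 0 = 0.\<close>

lemma left_outer_branch_pt_mem_pts: "i \<le> n \<Longrightarrow> lam * pt i + (lam - 1) \<in> pts"
proof -
  assume "i \<le> n"
  then consider "i = 0" | "0 < i" "i < n" | "i = n" by linarith
  then show ?thesis
  proof cases
    case 2
    then have "n - i = Suc (n - i - 1)" by simp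
    then have "lam * pt i + (lam - 1) = - y (n - i - 1)"
      using 2 lam_mult_one_minus_y_Suc[of "n - i - 1"] by (simp add: pt_eqs algebra_simps)
    then show ?thesis using minus_y_mem_pts[of "n - i - 1"] by simp
  qed (use lam_half_minus_1 in \<open>simp_all add: pts_def pt_eqs\<close>)
qed

lemma left_inner_branch_pt_mem_pts: "n \<le> i \<Longrightarrow> i \<le> n + 2 \<Longrightarrow> - lam * pt i - 1 \<in> pts"
proof -
  assume "n \<le> i" "i \<le> n + 2"
  then consider "i = n" | "i = n + 1" | "i = n + 2" by linarith
  then show ?thesis
  proof cases
    case 2
    then show ?thesis using minus_y_mem_pts[of "n - 1"] lam_mult_k by (simp add: pt_eqs)
  qed (use lam_half_minus_1 in \<open>simp_all add: pts_def pt_eqs\<close>)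
qed

lemma right_inner_branch_pt_mem_pts: "n + 2 \<le> i \<Longrightarrow> i \<le> n + 4 \<Longrightarrow> - lam * pt i + 1 \<in> pts"
proof -
  assume "n + 2 \<le> i" "i \<le> n + 4"
  then consider "i = n + 2" | "i = n + 3" | "i = n + 4" by linarith
  then show ?thesis
  proof cases
    case 2
    then show ?thesis using y_mem_pts[of "n - 1"] lam_mult_k by (simp add: pt_eqs)
  next
    case 3
    then have "- lam * pt i + 1 = - (lam / 2 - 1)" by (simp add: pt_eqs)
    then show ?thesis by (simp add: lam_half_minus_1 pts_def)
  qed (simp add: pts_def pt_eqs)
qed

lemma right_outer_branch_pt_mem_pts: "n + 4 \<le> i \<Longrightarrow> i \<le> 2 * n + 4 \<Longrightarrow> lam * pt i + (1 - lam) \<in> pts"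
proof -
  assume "n + 4 \<le> i" "i \<le> 2 * n + 4"
  then consider "i = n + 4" | "n + 4 < i" "i < 2 * n + 4" | "i = 2 * n + 4" by linarith
  then show ?thesis
  proof cases
    case 1
    then have "lam * pt i + (1 - lam) = - (lam / 2 - 1)" by (simp add: pt_eqs)
    then show ?thesis by (simp add: lam_half_minus_1 pts_def)
  next
    case 2
    then have "i - n - 4 = Suc (i - n - 5)" by simp
    then have "lam * pt i + (1 - lam) = y (i - n - 5)"
      using 2 lam_mult_one_minus_y_Suc[of "i - n - 5"] by (simp add: pt_eqs algebra_simps)
    then show ?thesis using 2 y_mem_pts[of "i - n - 5"] by simp
  qed (simp add: pts_def pt_eqs)
qed

lemma T_image_interval:
  assumes j: "j < 2 * n + 4"
  shows "\<exists>lo hi. lo < hi \<and> hi < 2 * n + 5 \<and> T ` {pt j<..<pt (Suc j)} = {pt lo<..<pt hi}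
           \<and> pt hi - pt lo = lam * (pt (Suc j) - pt j)"
proof -
  have ab: "pt j < pt (Suc j)" by (simp add: pt_less_iff)
  consider "Suc j \<le> n" | "n \<le> j" "j \<le> n + 1" | "n + 2 \<le> j" "j \<le> n + 3" | "n + 4 \<le> j"
    by linarith
  then show ?thesis
  proof cases
    case 1
    show ?thesis
    proof (rule T_image_affine_piece[OF ab, of lam "lam - 1"])
      fix x assume "pt j < x" "x < pt (Suc j)"
      moreover have "pt (Suc j) \<le> pt n" using 1 by (simp add: pt_le_iff)
      ultimately show "T x = lam * x + (lam - 1)" by (simp add: T_eq pt_eqs)
    qed (use 1 left_outer_branch_pt_mem_pts in auto)
  next
    case 2
    show ?thesis
    proof (rule T_image_affine_piece[OF ab, of "- lam" "- 1"])
      fix x assume "pt j < x" "x < pt (Suc j)"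
      moreover have "pt n \<le> pt j" "pt (Suc j) \<le> pt (n + 2)" using 2 by (simp_all add: pt_le_iff)
      ultimately show "T x = - lam * x + - 1" by (simp add: T_eq pt_eqs)
    qed (use 2 left_inner_branch_pt_mem_pts in auto)
  next
    case 3
    show ?thesis
    proof (rule T_image_affine_piece[OF ab, of "- lam" 1])
      fix x assume "pt j < x" "x < pt (Suc j)"
      moreover have "pt (n + 2) \<le> pt j" "pt (Suc j) \<le> pt (n + 4)" using 3 by (simp_all add: pt_le_iff)
      ultimately show "T x = - lam * x + 1" by (simp add: T_eq pt_eqs)
    qed (use 3 right_inner_branch_pt_mem_pts in auto)
  next
    case 4
    show ?thesis
    proof (rule T_image_affine_piece[OF ab, of lam "1 - lam"])
      fix x assume "pt j < x" "x < pt (Suc j)"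
      moreover have "pt (n + 4) \<le> pt j" using 4 by (simp add: pt_le_iff)
      ultimately show "T x = lam * x + (1 - lam)" by (simp add: T_eq pt_eqs)
    qed (use 4 j right_outer_branch_pt_mem_pts in auto)
  qed
qed

definition "a i j = (if R n (Suc i) \<subseteq> T ` R n (Suc j) then 1 else (0::real))"

lemma A_carrier: "A n \<in> carrier_mat (2 * n + 4) (2 * n + 4)"
  and M_carrier: "M n \<in> carrier_mat (2 * n + 4) (2 * n + 4)"
  by (simp_all add: A_def M_def)

lemma A_entry: "i < 2 * n + 4 \<Longrightarrow> j < 2 * n + 4 \<Longrightarrow> A n $$ (i, j) = complex_of_real (a i j)"
  by (simp add: A_def a_def T_def)

lemma M_entry: "i < 2 * n + 4 \<Longrightarrow> j < 2 * n + 4 \<Longrightarrow> M n $$ (i, j) = complex_of_real (a i j / lam)"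
  using A_carrier by (simp add: M_def A_entry lam_def k_def divide_inverse mult.commute)

lemma interval_lengths_left_eigenvector:
  assumes j: "j < 2 * n + 4"
  shows "(\<Sum>i<2 * n + 4. (pt (Suc i) - pt i) * a i j) = lam * (pt (Suc j) - pt j)"
proof -
  obtain lo hi where lh: "lo < hi" "hi < 2 * n + 5" "T ` {pt j<..<pt (Suc j)} = {pt lo<..<pt hi}"
    "pt hi - pt lo = lam * (pt (Suc j) - pt j)"
    using T_image_interval[OF j] by auto
  have "a i j = (if i \<in> {lo..<hi} then 1 else 0)" if "i < 2 * n + 4" for i
    using that unfolding a_def R_eq[OF j] lh(3) R_eq[OF that] greaterThanLessThan_subseteq_greaterThanLessThan
    by (simp add: pt_less_iff pt_le_iff)
  then have "(\<Sum>i<2 * n + 4. (pt (Suc i) - pt i) * a i j)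
      = (\<Sum>i<2 * n + 4. if i \<in> {lo..<hi} then pt (Suc i) - pt i else 0)"
    by (intro sum.cong) simp_all
  also have "\<dots> = (\<Sum>i\<in>{..<2 * n + 4} \<inter> {lo..<hi}. pt (Suc i) - pt i)"
    by (rule sum.inter_restrict[symmetric]) simp
  also have "{..<2 * n + 4} \<inter> {lo..<hi} = {lo..<hi}" using lh by auto
  also have "(\<Sum>i\<in>{lo..<hi}. pt (Suc i) - pt i) = pt hi - pt lo"
    using lh by (intro sum_Suc_diff') simp
  finally show ?thesis using lh(4) by simp
qed

end

theorem corollary11:
  fixes n :: nat
  assumes "n \<ge> 1"
  shows "spectral_radius (A n) = 2 * (1 + kappa n) \<and> spectral_radius (M n) = 1"
proof -
  interpret paired_tent_n n using assms by unfold_locales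
  have N: "(0::nat) < 2 * n + 4" by simp
  have lengths_pos: "pt (Suc i) - pt i > 0" for i
    by (simp add: pt_less_iff)
  have "spectral_radius (A n) = lam"
    by (rule spectral_radius_eq_if_positive_left_eigenvector[OF A_carrier N A_entry _ lengths_pos
          interval_lengths_left_eigenvector]) (auto simp: a_def)
  moreover have "spectral_radius (M n) = 1"
  proof (rule spectral_radius_eq_if_positive_left_eigenvector[OF M_carrier N M_entry _ lengths_pos])
    fix j assume "j < 2 * n + 4"
    then show "(\<Sum>i<2 * n + 4. (pt (Suc i) - pt i) * (a i j / lam)) = 1 * (pt (Suc j) - pt j)"
      using interval_lengths_left_eigenvector[of j] lam_gt_2
      by (simp add: sum_divide_distrib[symmetric])
  qed (use lam_gt_2 in \<open>auto simp: a_def\<close>)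
  ultimately show ?thesis by (simp add: lam_def k_def)
qed

end
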